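(* The class of ($ISK_4$, wheel)-free graphs is 2-cutset-safe.
   Context: All graphs are finite and simple. A graph is $ISK_4$-free if it contains no induced subgraph isomorphic to a subdivision of $K_4$ (a graph obtained from $K_4$ by replacing edges by internally vertex-disjoint paths). A hole is a cycle with no chords (a chordless cycle). A wheel $(H,v)$ consists of a hole $H$ and a vertex $v$ with at least three neighbours in $H$; a graph is wheel-free if it contains no wheel as an induced subgraph. A connected graph $G$ has a 1-cutset if there is $x\in V(G)$ with $G\setminus\{x\}$ having at least two components. A 2-cutset is a pair of vertices $u,v$ with $G\setminus\{u,v\}$ not connected. For a component $C$ of $G\setminus\{u,v\}$, $\operatorname{cl}(C)$ is obtained from the subgraph induced by $C\cup\{u,v\}$ by adding the edge $uv$, and $\operatorname{cl}^*(C)$ is obtained from $\operatorname{cl}(C)$ by subdividing the edge $uv$ exactly once. A hereditary class $\mathcal{F}$ is 2-cutset-safe if for every $G\in\mathcal{F}$ with no 1-cutset, every 2-cutset $\{u,v\}$ of $G$ and every component $C$ of $G\setminus\{u,v\}$, either $\operatorname{cl}(C)\in\mathcal{F}$ or $\operatorname{cl}^*(C)\in\mathcal{F}$. *)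

theory Defs
  imports Main
begin

definition graph :: "'a set \<Rightarrow> 'a set set \<Rightarrow> bool" where
  "graph V E \<longleftrightarrow> finite V \<and> (\<forall>e\<in>E. \<exists>x y. e = {x, y} \<and> x \<noteq> y \<and> x \<in> V \<and> y \<in> V)"

definition induced :: "'a set set \<Rightarrow> 'a set \<Rightarrow> 'a set set" where
  "induced E S = {e \<in> E. e \<subseteq> S}"

definition path_list :: "'a list \<Rightarrow> 'a \<Rightarrow> 'a \<Rightarrow> bool" where
  "path_list p x y \<longleftrightarrow> length p \<ge> 2 \<and> distinct p \<and> hd p = x \<and> last p = y"

definition path_edges :: "'a list \<Rightarrow> 'a set set" where
  "path_edges p = {{p ! i, p ! (Suc i)} | i. Suc i < length p}"

definition interior :: "'a list \<Rightarrow> 'a set" where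
  "interior p = set p - {hd p, last p}"

definition subdivK4 :: "'a set \<Rightarrow> 'a set set \<Rightarrow> bool" where
  "subdivK4 V E \<longleftrightarrow>
    (\<exists>a b c d pab pac pad pbc pbd pcd.
       distinct [a, b, c, d] \<and>
       path_list pab a b \<and> path_list pac a c \<and> path_list pad a d \<and>
       path_list pbc b c \<and> path_list pbd b d \<and> path_list pcd c d \<and>
       (let ps = [pab, pac, pad, pbc, pbd, pcd] in
          (\<forall>i<6. \<forall>j<6. i \<noteq> j \<longrightarrow> interior (ps ! i) \<inter> interior (ps ! j) = {}) \<and>
          (\<forall>i<6. interior (ps ! i) \<inter> {a, b, c, d} = {}) \<and>
          V = (\<Union>i<6. set (ps ! i)) \<and>
          E = (\<Union>i<6. path_edges (ps ! i))))"

definition ISK4_free :: "'a set \<Rightarrow> 'a set set \<Rightarrow> bool" where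
  "ISK4_free V E \<longleftrightarrow> \<not> (\<exists>S. S \<subseteq> V \<and> subdivK4 S (induced E S))"

definition hole :: "'a set \<Rightarrow> 'a set set \<Rightarrow> 'a set \<Rightarrow> bool" where
  "hole V E H \<longleftrightarrow> H \<subseteq> V \<and>
     (\<exists>cs. distinct cs \<and> length cs \<ge> 3 \<and> set cs = H \<and>
        induced E H = {{cs ! i, cs ! ((Suc i) mod length cs)} | i. i < length cs})"

definition wheel_free :: "'a set \<Rightarrow> 'a set set \<Rightarrow> bool" where
  "wheel_free V E \<longleftrightarrow>
     \<not> (\<exists>H w. hole V E H \<and> w \<in> V \<and> w \<notin> H \<and> card {x \<in> H. {x, w} \<in> E} \<ge> 3)"

definition isk4_wheel_free :: "'a set \<Rightarrow> 'a set set \<Rightarrow> bool" where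
  "isk4_wheel_free V E \<longleftrightarrow> graph V E \<and> ISK4_free V E \<and> wheel_free V E"

definition adj_in :: "'a set \<Rightarrow> 'a set set \<Rightarrow> 'a \<Rightarrow> 'a \<Rightarrow> bool" where
  "adj_in S E x y \<longleftrightarrow> x \<in> S \<and> y \<in> S \<and> {x, y} \<in> E"

definition components :: "'a set \<Rightarrow> 'a set set \<Rightarrow> 'a set set" where
  "components S E = {{y \<in> S. (adj_in S E)\<^sup>*\<^sup>* x y} | x. x \<in> S}"

definition has_1cutset :: "'a set \<Rightarrow> 'a set set \<Rightarrow> bool" where
  "has_1cutset V E \<longleftrightarrow> (\<exists>x\<in>V. card (components (V - {x}) E) \<ge> 2)"

definition is_2cutset :: "'a set \<Rightarrow> 'a set set \<Rightarrow> 'a \<Rightarrow> 'a \<Rightarrow> bool" where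
  "is_2cutset V E u v \<longleftrightarrow> u \<in> V \<and> v \<in> V \<and> u \<noteq> v \<and> card (components (V - {u, v}) E) \<ge> 2"

definition cl_V :: "'a set \<Rightarrow> 'a \<Rightarrow> 'a \<Rightarrow> 'a set" where
  "cl_V C u v = C \<union> {u, v}"

definition cl_E :: "'a set set \<Rightarrow> 'a set \<Rightarrow> 'a \<Rightarrow> 'a \<Rightarrow> 'a set set" where
  "cl_E E C u v = induced E (C \<union> {u, v}) \<union> {{u, v}}"

text \<open>cl*(C): cl(C) with the edge uv subdivided once by a new vertex None
  (old vertices are tagged with Some).\<close>
definition clstar_V :: "'a set \<Rightarrow> 'a \<Rightarrow> 'a \<Rightarrow> 'a option set" where
  "clstar_V C u v = Some ` (C \<union> {u, v}) \<union> {None}"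

definition clstar_E :: "'a set set \<Rightarrow> 'a set \<Rightarrow> 'a \<Rightarrow> 'a \<Rightarrow> 'a option set set" where
  "clstar_E E C u v = (\<lambda>e. Some ` e) ` (cl_E E C u v - {{u, v}})
                      \<union> {{Some u, None}, {None, Some v}}"

end

(* If uv is an edge, cl(C) is an induced subgraph of G.  Otherwise take a second component C'
   of G - {u,v}.  As G has no 1-cutset, both u and v have neighbours in C', so some chordless
   u-v path P has its interior in C'; since no edge joins C to C', the subgraph induced by
   C, u, v and P is cl*(C) with its path u-m-v lengthened to P.  Un-subdividing an edge xz whose
   end x has degree two preserves both properties: a K4 subdivision through xz lifts to one
   through the subdivided edge, x has too few neighbours to be a wheel centre, and holes
   through xz lift.
   Contracting P back to length two therefore shows that cl*(C) is ISK4-free and wheel-free. *)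
theory Submission
  imports Defs
begin

section \<open>Paths and cycles as vertex lists\<close>

lemma path_edges_Nil [simp]: "path_edges [] = {}"
  by (simp add: path_edges_def)

lemma path_edges_singleton [simp]: "path_edges [x] = {}"
  by (simp add: path_edges_def)

lemma path_edges_Cons_Cons [simp]:
  "path_edges (x # y # zs) = insert {x, y} (path_edges (y # zs))"
  unfolding path_edges_def
  by (auto simp: less_Suc_eq_0_disj) (metis nth_Cons_0, metis nth_Cons_Suc)

lemma path_edges_append:
  "path_edges (xs @ ys) =
     path_edges xs \<union> path_edges ys \<union> (if xs = [] \<or> ys = [] then {} else {{last xs, hd ys}})"
  by (induction xs rule: induct_list012) (auto simp: neq_Nil_conv)

lemma path_edges_Cons: "xs \<noteq> [] \<Longrightarrow> path_edges (x # xs) = insert {x, hd xs} (path_edges xs)"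
  by (cases xs) auto

lemma path_edges_snoc: "xs \<noteq> [] \<Longrightarrow> path_edges (xs @ [x]) = insert {last xs, x} (path_edges xs)"
  by (auto simp: path_edges_append)

lemma path_edges_subset_set: "e \<in> path_edges p \<Longrightarrow> e \<subseteq> set p"
  by (auto simp: path_edges_def)

lemma path_edges_map: "path_edges (map f p) = (\<lambda>e. f ` e) ` path_edges p"
  by (induction p rule: induct_list012) auto

lemma path_edges_decomp:
  assumes "e \<in> path_edges p"
  obtains l s t r where "p = l @ [s, t] @ r" "e = {s, t}"
proof -
  obtain i where i: "e = {p ! i, p ! Suc i}" "Suc i < length p"
    using assms by (auto simp: path_edges_def)
  then have "p = take i p @ [p ! i, p ! Suc i] @ drop (Suc (Suc i)) p"
    by (simp add: Cons_nth_drop_Suc)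
  then show thesis using i(1) by (rule that)
qed

lemma path_edges_split_at: "path_edges (xs @ a # ys) = path_edges (xs @ [a]) \<union> path_edges (a # ys)"
  by (induction xs rule: induct_list012) auto

lemma path_edges_skip_loop: "path_edges (p @ a # r) \<subseteq> path_edges (p @ a # q @ a # r)"
proof -
  have "path_edges (p @ a # q @ a # r) =
      path_edges (p @ [a]) \<union> (path_edges (a # q @ [a]) \<union> path_edges (a # r))"
    using path_edges_split_at[of p a "q @ a # r"] path_edges_split_at[of "a # q" a r] by simp
  then show ?thesis
    by (simp add: path_edges_split_at[of p a r] sup.coboundedI1 sup.coboundedI2)
qed

lemma path_edges_skip_chord: "path_edges (p @ a # b # r) \<subseteq> insert {a, b} (path_edges (p @ a # q @ b # r))"
proof -
  have "path_edges (p @ a # b # r) = path_edges (p @ [a]) \<union> insert {a, b} (path_edges (b # r))"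
    by (simp only: path_edges_split_at[of p a "b # r"] path_edges_Cons_Cons)
  moreover have "path_edges (p @ a # q @ b # r) =
      path_edges (p @ [a]) \<union> (path_edges (a # q @ [b]) \<union> path_edges (b # r))"
    using path_edges_split_at[of p a "q @ b # r"] path_edges_split_at[of "a # q" b r] by simp
  moreover have "X \<union> insert e Z \<subseteq> insert e (X \<union> (Y \<union> Z))" for X Y Z :: "'a set set" and e
    by blast
  ultimately show ?thesis by simp
qed

lemma path_list_nonempty: "path_list p s t \<Longrightarrow> p \<noteq> []"
  by (auto simp: path_list_def)

lemma set_path_list:
  assumes "path_list p s t"
  shows "set p = insert s (insert t (interior p))"
proof -
  have "p \<noteq> []" using assms by (rule path_list_nonempty)
  with assms show ?thesis by (auto simp: path_list_def interior_def)
qed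

lemma path_list_map:
  assumes "inj_on f (set p)" "path_list p s t"
  shows "path_list (map f p) (f s) (f t)"
  using assms path_list_nonempty[OF assms(2)]
  by (simp add: path_list_def distinct_map hd_map last_map)

lemma interior_map: "inj_on f (set p) \<Longrightarrow> p \<noteq> [] \<Longrightarrow> interior (map f p) = f ` interior p"
  by (simp add: interior_def hd_map last_map inj_on_image_set_diff)

definition subdivide_edge :: "'a set set \<Rightarrow> 'a \<Rightarrow> 'a \<Rightarrow> 'a \<Rightarrow> 'a set set" where
  "subdivide_edge E x z w = E - {{x, z}} \<union> {{x, w}, {w, z}}"

lemma subdivide_edge_commute: "subdivide_edge E z x w = subdivide_edge E x z w"
  by (auto simp: subdivide_edge_def)

lemma subdivide_edge_Un: "{x, z} \<notin> F \<Longrightarrow> F \<union> subdivide_edge P x z w = subdivide_edge (F \<union> P) x z w"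
  by (auto simp: subdivide_edge_def)

lemma path_edges_insert_vertex:
  assumes "distinct (l @ [s, t] @ r)" and "w \<notin> set (l @ [s, t] @ r)"
  shows "path_edges (l @ [s, w, t] @ r) = subdivide_edge (path_edges (l @ [s, t] @ r)) s t w"
proof -
  have "{s, t} \<notin> path_edges l" "{s, t} \<notin> path_edges (t # r)"
    using assms(1) path_edges_subset_set by fastforce+
  moreover have "l \<noteq> [] \<Longrightarrow> {s, t} \<noteq> {last l, s}"
    using assms(1) by (auto simp: doubleton_eq_iff)
  ultimately show ?thesis
    by (auto simp: path_edges_append subdivide_edge_def)
qed

lemma path_list_subdivide_edge:
  assumes p: "path_list p s t" and xz: "{x, z} \<in> path_edges p" and w: "w \<notin> set p"
  obtains p' where "path_list p' s t" "set p' = insert w (set p)"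
    "interior p' = insert w (interior p)" "path_edges p' = subdivide_edge (path_edges p) x z w"
proof -
  obtain l s0 t0 r where lr: "p = l @ [s0, t0] @ r" "{x, z} = {s0, t0}"
    using xz by (rule path_edges_decomp)
  define p' where "p' = l @ [s0, w, t0] @ r"
  have "distinct p" using p by (simp add: path_list_def)
  have "path_edges p' = subdivide_edge (path_edges p) s0 t0 w"
    unfolding p'_def lr(1) using \<open>distinct p\<close> w lr(1) by (intro path_edges_insert_vertex) simp_all
  also have "\<dots> = subdivide_edge (path_edges p) x z w"
    using lr(2) subdivide_edge_commute by (metis doubleton_eq_iff)
  finally have edges: "path_edges p' = subdivide_edge (path_edges p) x z w" .
  have ends: "hd p' = hd p" "last p' = last p"
    unfolding p'_def lr(1) by (simp_all add: hd_append last_append)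
  have vertices: "set p' = insert w (set p)"
    unfolding p'_def lr(1) by auto
  have "path_list p' s t"
    using p w ends \<open>distinct p\<close> unfolding path_list_def p'_def lr(1) by auto
  moreover have "interior p' = insert w (interior p)"
    using vertices ends w path_list_nonempty[OF p]
    unfolding interior_def by (auto simp: hd_in_set last_in_set)
  ultimately show thesis using vertices edges by (intro that)
qed

definition cycle_edges :: "'a list \<Rightarrow> 'a set set" where
  "cycle_edges cs = insert {last cs, hd cs} (path_edges cs)"

lemma cycle_edges_conv_nth:
  assumes "cs \<noteq> []"
  shows "{{cs ! i, cs ! (Suc i mod length cs)} | i. i < length cs} = cycle_edges cs"
proof (rule set_eqI, rule iffI)
  fix e assume "e \<in> {{cs ! i, cs ! (Suc i mod length cs)} | i. i < length cs}"
  then obtain i where i: "e = {cs ! i, cs ! (Suc i mod length cs)}" "i < length cs" by blast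
  show "e \<in> cycle_edges cs"
  proof (cases "Suc i < length cs")
    case True
    with i show ?thesis by (auto simp: cycle_edges_def path_edges_def)
  next
    case False
    with i(2) have "Suc i = length cs" by simp
    then have "i = length cs - 1" "Suc i mod length cs = 0" by simp_all
    with i(1) assms show ?thesis
      by (simp add: cycle_edges_def last_conv_nth hd_conv_nth)
  qed
next
  fix e assume "e \<in> cycle_edges cs"
  then consider "e = {last cs, hd cs}" | i where "e = {cs ! i, cs ! Suc i}" "Suc i < length cs"
    by (auto simp: cycle_edges_def path_edges_def)
  then show "e \<in> {{cs ! i, cs ! (Suc i mod length cs)} | i. i < length cs}"
  proof cases
    case 1
    with assms show ?thesis
      by (intro CollectI exI[of _ "length cs - 1"]) (auto simp: last_conv_nth hd_conv_nth)
  next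
    case 2
    then show ?thesis by (intro CollectI exI[of _ i]) auto
  qed
qed

lemma hole_iff_cycle_edges:
  "hole V E H \<longleftrightarrow>
     H \<subseteq> V \<and> (\<exists>cs. distinct cs \<and> length cs \<ge> 3 \<and> set cs = H \<and> induced E H = cycle_edges cs)"
proof -
  have conv: "length cs \<ge> 3 \<Longrightarrow>
      {{cs ! i, cs ! (Suc i mod length cs)} | i. i < length cs} = cycle_edges cs" for cs :: "'a list"
    by (rule cycle_edges_conv_nth) auto
  have "(distinct cs \<and> length cs \<ge> 3 \<and> set cs = H \<and>
          induced E H = {{cs ! i, cs ! (Suc i mod length cs)} | i. i < length cs}) \<longleftrightarrow>
        (distinct cs \<and> length cs \<ge> 3 \<and> set cs = H \<and> induced E H = cycle_edges cs)" for cs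
    by (cases "length cs \<ge> 3") (simp_all add: conv)
  then show ?thesis
    unfolding hole_def by presburger
qed

lemma cycle_edges_rotate1 [simp]: "cycle_edges (rotate1 cs) = cycle_edges cs"
proof (cases cs)
  case (Cons a l)
  then show ?thesis
    by (cases "l = []") (auto simp: cycle_edges_def path_edges_snoc path_edges_Cons)
qed simp

lemma cycle_edges_rotate [simp]: "cycle_edges (rotate k cs) = cycle_edges cs"
  by (induction k) auto

lemma cycle_edges_map: "cs \<noteq> [] \<Longrightarrow> cycle_edges (map f cs) = (\<lambda>e. f ` e) ` cycle_edges cs"
  by (simp add: cycle_edges_def path_edges_map hd_map last_map)

lemma closing_edge_notin_path_edges:
  assumes "distinct cs" "length cs \<ge> 3"
  shows "{last cs, hd cs} \<notin> path_edges cs"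
proof
  assume "{last cs, hd cs} \<in> path_edges cs"
  then obtain i where "{last cs, hd cs} = {cs ! i, cs ! Suc i}" "Suc i < length cs"
    by (auto simp: path_edges_def)
  moreover have "cs \<noteq> []" using assms(2) by auto
  ultimately show False using assms
    by (auto simp: last_conv_nth hd_conv_nth doubleton_eq_iff nth_eq_iff_index_eq)
qed

lemma rotate_to_closing_edge:
  assumes "e \<in> cycle_edges cs"
  obtains k where "e = {last (rotate k cs), hd (rotate k cs)}"
proof (cases "e = {last cs, hd cs}")
  case True
  then show thesis by (intro that[of 0]) simp
next
  case False
  with assms have "e \<in> path_edges cs" by (simp add: cycle_edges_def)
  then obtain l s t r where lr: "cs = (l @ [s]) @ (t # r)" "e = {s, t}"
    by (auto elim: path_edges_decomp)
  then have "rotate (length (l @ [s])) cs = (t # r) @ (l @ [s])"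
    by (simp only: rotate_append)
  with lr(2) show thesis by (intro that[of "length (l @ [s])"]) (simp add: insert_commute)
qed

lemma cycle_edges_two_neighbours:
  assumes "distinct cs" "length cs \<ge> 3" "x \<in> set cs"
  obtains a b where "a \<noteq> b" "{x, a} \<in> cycle_edges cs" "{x, b} \<in> cycle_edges cs"
proof -
  obtain l r where cs: "cs = l @ x # r"
    using assms(3) by (meson split_list)
  define rest where "rest = r @ l"
  have rot: "rotate (length l) cs = x # rest"
    using cs by (simp add: rotate_append rest_def)
  have "length rest \<ge> 2"
    using cs assms(2) by (simp add: rest_def)
  then obtain y ys where y: "rest = y # ys" and "ys \<noteq> []"
    by (cases rest) (auto simp: Suc_le_eq)
  then obtain ys' z where "ys = ys' @ [z]"
    by (cases ys rule: rev_cases) auto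
  with y have rest: "rest = y # ys' @ [z]"
    by simp
  have "distinct (x # y # ys' @ [z])"
    using rot assms(1) unfolding rest by (metis distinct_rotate)
  then have "y \<noteq> z" by simp
  have cyc: "cycle_edges cs = cycle_edges (x # y # ys' @ [z])"
    using rot unfolding rest by (metis cycle_edges_rotate)
  have "{x, y} \<in> cycle_edges cs" "{x, z} \<in> cycle_edges cs"
    unfolding cyc by (simp_all add: cycle_edges_def insert_commute)
  with \<open>y \<noteq> z\<close> show thesis by (rule that)
qed

lemma induced_induced: "S \<subseteq> W \<Longrightarrow> induced (induced E W) S = induced E S"
  by (auto simp: induced_def)

lemma induced_image:
  assumes inj: "inj_on f V" and E: "\<forall>e\<in>E. e \<subseteq> V" and S: "S \<subseteq> V"
  shows "induced ((\<lambda>e. f ` e) ` E) (f ` S) = (\<lambda>e. f ` e) ` induced E S"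
proof -
  have "f ` e \<subseteq> f ` S \<longleftrightarrow> e \<subseteq> S" if "e \<in> E" for e
  proof
    assume "f ` e \<subseteq> f ` S"
    then show "e \<subseteq> S"
      using inj_on_image_mem_iff[OF inj _ S] E that by blast
  qed auto
  then show ?thesis
    unfolding induced_def by auto
qed

lemma induced_subdivide_edge:
  assumes E: "\<forall>e\<in>E. e \<subseteq> V" and w: "w \<notin> V" and S: "S \<subseteq> V" "x \<in> S" "z \<in> S"
  shows "induced (subdivide_edge E x z w) (insert w S) = subdivide_edge (induced E S) x z w"
proof -
  have "w \<notin> e" if "e \<in> E" for e
    using E w that by blast
  then show ?thesis
    using S unfolding induced_def subdivide_edge_def by auto
qed

lemma induced_subdivide_edge_avoiding:
  assumes E: "\<forall>e\<in>E. e \<subseteq> V" and w: "w \<notin> V" and S: "S \<subseteq> V" "\<not> {x, z} \<subseteq> S"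
  shows "induced (subdivide_edge E x z w) S = induced E S"
  using assms unfolding induced_def subdivide_edge_def by auto

section \<open>Subdivisions of K4\<close>

definition K4_ends :: "'a \<Rightarrow> 'a \<Rightarrow> 'a \<Rightarrow> 'a \<Rightarrow> ('a \<times> 'a) list" where
  "K4_ends a b c d = [(a, b), (a, c), (a, d), (b, c), (b, d), (c, d)]"

definition K4_paths :: "'a set \<Rightarrow> 'a set set \<Rightarrow> 'a \<Rightarrow> 'a \<Rightarrow> 'a \<Rightarrow> 'a \<Rightarrow> 'a list list \<Rightarrow> bool" where
  "K4_paths V E a b c d ps \<longleftrightarrow> distinct [a, b, c, d] \<and>
     list_all2 (\<lambda>p (s, t). path_list p s t) ps (K4_ends a b c d) \<and>
     (\<forall>i<6. \<forall>j<6. i \<noteq> j \<longrightarrow> interior (ps ! i) \<inter> interior (ps ! j) = {}) \<and>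
     (\<forall>i<6. interior (ps ! i) \<inter> {a, b, c, d} = {}) \<and>
     V = (\<Union>i<6. set (ps ! i)) \<and> E = (\<Union>i<6. path_edges (ps ! i))"

lemma K4_paths_length: "K4_paths V E a b c d ps \<Longrightarrow> length ps = 6"
  by (auto simp: K4_paths_def K4_ends_def dest: list_all2_lengthD)

lemma subdivK4_iff_K4_paths: "subdivK4 V E \<longleftrightarrow> (\<exists>a b c d ps. K4_paths V E a b c d ps)"
proof -
  have six: "length ps = 6 \<longleftrightarrow> (\<exists>p1 p2 p3 p4 p5 p6. ps = [p1, p2, p3, p4, p5, p6])" for ps :: "'a list list"
    by (auto simp: numeral_eq_Suc length_Suc_conv)
  have "subdivK4 V E \<longleftrightarrow>
      (\<exists>a b c d p1 p2 p3 p4 p5 p6. K4_paths V E a b c d [p1, p2, p3, p4, p5, p6])"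
    unfolding subdivK4_def K4_paths_def K4_ends_def Let_def by simp
  also have "\<dots> \<longleftrightarrow> (\<exists>a b c d ps. K4_paths V E a b c d ps)"
    using K4_paths_length six by metis
  finally show ?thesis .
qed

lemma K4_ends_length [simp]: "length (K4_ends a b c d) = 6"
  by (simp add: K4_ends_def)

lemma K4_ends_map: "K4_ends (f a) (f b) (f c) (f d) = map (map_prod f f) (K4_ends a b c d)"
  by (simp add: K4_ends_def)

lemma K4_ends_in: "i < 6 \<Longrightarrow> {fst (K4_ends a b c d ! i), snd (K4_ends a b c d ! i)} \<subseteq> {a, b, c, d}"
  by (auto simp: K4_ends_def less_Suc_eq numeral_eq_Suc)

lemma K4_ends_distinct:
  "distinct [a, b, c, d] \<Longrightarrow> i < 6 \<Longrightarrow> k < 6 \<Longrightarrow> i \<noteq> k \<Longrightarrow>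
    {fst (K4_ends a b c d ! i), snd (K4_ends a b c d ! i)} \<noteq>
    {fst (K4_ends a b c d ! k), snd (K4_ends a b c d ! k)}"
  by (auto simp: K4_ends_def less_Suc_eq numeral_eq_Suc doubleton_eq_iff)

lemma K4_paths_path:
  "K4_paths V E a b c d ps \<Longrightarrow> i < 6 \<Longrightarrow>
    path_list (ps ! i) (fst (K4_ends a b c d ! i)) (snd (K4_ends a b c d ! i))"
  by (simp add: K4_paths_def list_all2_conv_all_nth split_beta)

lemma K4_paths_interiors_disjoint:
  "K4_paths V E a b c d ps \<Longrightarrow> i < 6 \<Longrightarrow> j < 6 \<Longrightarrow> i \<noteq> j \<Longrightarrow>
    interior (ps ! i) \<inter> interior (ps ! j) = {}"
  unfolding K4_paths_def by blast

lemma K4_paths_interior_branch: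
  "K4_paths V E a b c d ps \<Longrightarrow> i < 6 \<Longrightarrow> interior (ps ! i) \<inter> {a, b, c, d} = {}"
  unfolding K4_paths_def by blast

lemma K4_paths_vertices: "K4_paths V E a b c d ps \<Longrightarrow> V = (\<Union>i<6. set (ps ! i))"
  unfolding K4_paths_def by blast

lemma K4_paths_edges: "K4_paths V E a b c d ps \<Longrightarrow> E = (\<Union>i<6. path_edges (ps ! i))"
  unfolding K4_paths_def by blast

lemma K4_paths_set_subset: "K4_paths V E a b c d ps \<Longrightarrow> i < 6 \<Longrightarrow> set (ps ! i) \<subseteq> V"
  unfolding K4_paths_def by blast

lemma K4_paths_branch_subset:
  assumes "K4_paths V E a b c d ps"
  shows "{a, b, c, d} \<subseteq> V"
proof -
  have "path_list (ps ! 0) a b" "path_list (ps ! 5) c d"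
    using K4_paths_path[OF assms, of 0] K4_paths_path[OF assms, of 5] by (simp_all add: K4_ends_def)
  then have "{a, b} \<subseteq> set (ps ! 0)" "{c, d} \<subseteq> set (ps ! 5)"
    by (auto dest!: set_path_list)
  moreover have "set (ps ! 0) \<subseteq> V" "set (ps ! 5) \<subseteq> V"
    using K4_paths_set_subset[OF assms] by simp_all
  ultimately show ?thesis
    by blast
qed

lemma path_lists_sharing_edge:
  assumes p: "path_list p s t" and q: "path_list q s' t'"
    and disj: "interior p \<inter> set q = {}" "interior q \<inter> set p = {}"
    and xz: "{x, z} \<subseteq> set p" "{x, z} \<subseteq> set q" "x \<noteq> z"
  shows "{s, t} = {s', t'}"
proof -
  have "{x, z} \<subseteq> {s, t}"
    using xz(1,2) disj(1) set_path_list[OF p] by blast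
  moreover have "{x, z} \<subseteq> {s', t'}"
    using xz(1,2) disj(2) set_path_list[OF q] by blast
  ultimately show ?thesis
    using xz(3) by auto
qed

lemma K4_paths_edge_unique:
  assumes ps: "K4_paths V E a b c d ps" and ik: "i < 6" "k < 6" "i \<noteq> k"
    and xz: "{x, z} \<in> path_edges (ps ! i)" "x \<noteq> z"
  shows "{x, z} \<notin> path_edges (ps ! k)"
proof
  assume xzk: "{x, z} \<in> path_edges (ps ! k)"
  have disj: "interior (ps ! j) \<inter> set (ps ! l) = {}" if "j < 6" "l < 6" "j \<noteq> l" for j l
  proof -
    have "set (ps ! l) \<subseteq> interior (ps ! l) \<union> {a, b, c, d}"
      using set_path_list[OF K4_paths_path[OF ps \<open>l < 6\<close>]] K4_ends_in[of l a b c d] \<open>l < 6\<close> by auto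
    then show ?thesis
      using K4_paths_interiors_disjoint[OF ps that] K4_paths_interior_branch[OF ps \<open>j < 6\<close>] by auto
  qed
  have "distinct [a, b, c, d]"
    using ps by (simp add: K4_paths_def)
  moreover have "{fst (K4_ends a b c d ! i), snd (K4_ends a b c d ! i)} =
      {fst (K4_ends a b c d ! k), snd (K4_ends a b c d ! k)}"
    using K4_paths_path[OF ps ik(1)] K4_paths_path[OF ps ik(2)] disj[OF ik] disj[OF ik(2,1) ik(3)[symmetric]]
      path_edges_subset_set[OF xz(1)] path_edges_subset_set[OF xzk] xz(2)
    by (rule path_lists_sharing_edge)
  ultimately show False
    using K4_ends_distinct[of a b c d, OF _ ik] by blast
qed

lemma K4_paths_image:
  assumes ps: "K4_paths S F a b c d ps" and inj: "inj_on f S"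
  shows "K4_paths (f ` S) ((\<lambda>e. f ` e) ` F) (f a) (f b) (f c) (f d) (map (map f) ps)"
proof -
  have len: "length ps = 6" using ps by (rule K4_paths_length)
  have sub: "set (ps ! i) \<subseteq> S" if "i < 6" for i
    using K4_paths_set_subset[OF ps that] .
  then have inj_i: "inj_on f (set (ps ! i))" if "i < 6" for i
    using inj that by (meson inj_on_subset)
  have interior_i: "interior (map f (ps ! i)) = f ` interior (ps ! i)" if "i < 6" for i
    using interior_map[OF inj_i[OF that] path_list_nonempty[OF K4_paths_path[OF ps that]]] .
  have int_sub: "interior (ps ! i) \<subseteq> S" if "i < 6" for i
    using sub[OF that] by (auto simp: interior_def)
  have branch: "{a, b, c, d} \<subseteq> S" by (rule K4_paths_branch_subset[OF ps])
  have "distinct [a, b, c, d]"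
    using ps by (simp add: K4_paths_def)
  then have distinct: "distinct [f a, f b, f c, f d]"
    using branch by (simp add: inj_on_eq_iff[OF inj])
  have paths: "list_all2 (\<lambda>p (s, t). path_list p s t) (map (map f) ps) (K4_ends (f a) (f b) (f c) (f d))"
    unfolding list_all2_conv_all_nth
  proof (intro conjI allI impI)
    fix i assume "i < length (map (map f) ps)"
    then have i: "i < 6" using len by simp
    show "(\<lambda>p (s, t). path_list p s t) (map (map f) ps ! i) (K4_ends (f a) (f b) (f c) (f d) ! i)"
      using path_list_map[OF inj_i[OF i] K4_paths_path[OF ps i]] i len
      by (simp add: K4_ends_map split_beta)
  qed (simp add: len)
  show ?thesis
    unfolding K4_paths_def
  proof (intro conjI allI impI distinct paths)
    fix i j :: nat assume ij: "i < 6" "j < 6" "i \<noteq> j"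
    then have "interior (map (map f) ps ! i) \<inter> interior (map (map f) ps ! j) =
        f ` (interior (ps ! i) \<inter> interior (ps ! j))"
      using len interior_i inj_on_image_Int[OF inj int_sub[OF ij(1)] int_sub[OF ij(2)]] by simp
    then show "interior (map (map f) ps ! i) \<inter> interior (map (map f) ps ! j) = {}"
      using K4_paths_interiors_disjoint[OF ps ij] by simp
  next
    fix i :: nat assume i: "i < 6"
    then have "interior (map (map f) ps ! i) \<inter> {f a, f b, f c, f d} =
        f ` (interior (ps ! i) \<inter> {a, b, c, d})"
      using len interior_i inj_on_image_Int[OF inj int_sub[OF i] branch] by simp
    then show "interior (map (map f) ps ! i) \<inter> {f a, f b, f c, f d} = {}"
      using K4_paths_interior_branch[OF ps i] by simp
  next
    show "f ` S = (\<Union>i<6. set (map (map f) ps ! i))"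
      using len K4_paths_vertices[OF ps] by (simp add: image_UN)
    show "(\<lambda>e. f ` e) ` F = (\<Union>i<6. path_edges (map (map f) ps ! i))"
      using len K4_paths_edges[OF ps] by (simp add: image_UN path_edges_map)
  qed
qed

lemma K4_paths_subdivide_edge:
  assumes ps: "K4_paths S F a b c d ps" and xz: "{x, z} \<in> F" "x \<noteq> z" and w: "w \<notin> S"
  obtains ps' where "K4_paths (insert w S) (subdivide_edge F x z w) a b c d ps'"
proof -
  have len: "length ps = 6" using ps by (rule K4_paths_length)
  obtain i where i: "i < 6" "{x, z} \<in> path_edges (ps ! i)"
    using xz(1) K4_paths_edges[OF ps] by blast
  have "w \<notin> set (ps ! i)"
    using K4_paths_set_subset[OF ps i(1)] w by blast
  with K4_paths_path[OF ps i(1)] i(2) obtain p' where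
    p': "path_list p' (fst (K4_ends a b c d ! i)) (snd (K4_ends a b c d ! i))"
      "set p' = insert w (set (ps ! i))" "interior p' = insert w (interior (ps ! i))"
      "path_edges p' = subdivide_edge (path_edges (ps ! i)) x z w"
    by (rule path_list_subdivide_edge)
  define ps' where "ps' = ps[i := p']"
  have nth': "ps' ! k = (if k = i then p' else ps ! k)" if "k < 6" for k
    using len that by (simp add: ps'_def)
  have int_S: "interior (ps ! k) \<subseteq> S" if "k < 6" for k
    using K4_paths_set_subset[OF ps that] by (auto simp: interior_def)
  have branch: "{a, b, c, d} \<subseteq> S"
    by (rule K4_paths_branch_subset[OF ps])
  have unique: "{x, z} \<notin> path_edges (ps ! k)" if "k < 6" "k \<noteq> i" for k
    using K4_paths_edge_unique[OF ps i(1) that(1) that(2)[symmetric] i(2) xz(2)] .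
  show thesis
  proof (rule that, unfold K4_paths_def, intro conjI allI impI)
    show "distinct [a, b, c, d]"
      using ps by (simp add: K4_paths_def)
    show "list_all2 (\<lambda>p (s, t). path_list p s t) ps' (K4_ends a b c d)"
      unfolding list_all2_conv_all_nth
      using len nth' p'(1) K4_paths_path[OF ps] by (simp add: ps'_def split_beta)
  next
    fix k j :: nat assume kj: "k < 6" "j < 6" "k \<noteq> j"
    then show "interior (ps' ! k) \<inter> interior (ps' ! j) = {}"
      using nth' p'(3) K4_paths_interiors_disjoint[OF ps kj] int_S[OF kj(1)] int_S[OF kj(2)] w kj
      by auto
  next
    fix k :: nat assume "k < 6"
    then show "interior (ps' ! k) \<inter> {a, b, c, d} = {}"
      using nth' p'(3) K4_paths_interior_branch[OF ps] branch w by auto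
  next
    have "(\<Union>k<6. set (ps' ! k)) = insert w (\<Union>k<6. set (ps ! k))"
      using nth' p'(2) i(1) by (auto split: if_splits)
    then show "insert w S = (\<Union>k<6. set (ps' ! k))"
      using K4_paths_vertices[OF ps] by simp
  next
    have fresh: "w \<notin> e" if "k < 6" "e \<in> path_edges (ps ! k)" for k e
      using path_edges_subset_set[OF that(2)] K4_paths_set_subset[OF ps that(1)] w by blast
    have "(\<Union>k<6. path_edges (ps' ! k)) = subdivide_edge (\<Union>k<6. path_edges (ps ! k)) x z w"
      using nth' p'(4) i unique fresh[OF i] fresh[OF i(1)]
      by (auto simp: subdivide_edge_def doubleton_eq_iff split: if_splits)
    then show "subdivide_edge F x z w = (\<Union>k<6. path_edges (ps' ! k))"
      using K4_paths_edges[OF ps] by simp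
  qed
qed

lemma ISK4_free_induced:
  assumes "ISK4_free V E" "W \<subseteq> V"
  shows "ISK4_free W (induced E W)"
  using assms unfolding ISK4_free_def by (auto simp: induced_induced)

lemma ISK4_free_imageD:
  assumes inj: "inj_on f V" and E: "\<forall>e\<in>E. e \<subseteq> V"
    and free: "ISK4_free (f ` V) ((\<lambda>e. f ` e) ` E)"
  shows "ISK4_free V E"
  unfolding ISK4_free_def
proof
  assume "\<exists>S\<subseteq>V. subdivK4 S (induced E S)"
  then obtain S a b c d ps where S: "S \<subseteq> V" and ps: "K4_paths S (induced E S) a b c d ps"
    by (auto simp: subdivK4_iff_K4_paths)
  have "K4_paths (f ` S) (induced ((\<lambda>e. f ` e) ` E) (f ` S)) (f a) (f b) (f c) (f d) (map (map f) ps)"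
    using K4_paths_image[OF ps inj_on_subset[OF inj S]] induced_image[OF inj E S] by simp
  then have "subdivK4 (f ` S) (induced ((\<lambda>e. f ` e) ` E) (f ` S))"
    unfolding subdivK4_iff_K4_paths by blast
  with free S show False
    unfolding ISK4_free_def by blast
qed

lemma ISK4_free_subdivide_edgeD:
  assumes E: "\<forall>e\<in>E. e \<subseteq> V" and w: "w \<notin> V" and xz: "{x, z} \<in> E" "x \<noteq> z"
    and free: "ISK4_free (insert w V) (subdivide_edge E x z w)"
  shows "ISK4_free V E"
  unfolding ISK4_free_def
proof
  assume "\<exists>S\<subseteq>V. subdivK4 S (induced E S)"
  then obtain S where S: "S \<subseteq> V" "subdivK4 S (induced E S)" by blast
  show False
  proof (cases "{x, z} \<subseteq> S")
    case True
    obtain a b c d ps where "K4_paths S (induced E S) a b c d ps"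
      using S(2) by (auto simp: subdivK4_iff_K4_paths)
    moreover have "{x, z} \<in> induced E S" "w \<notin> S"
      using True xz(1) S(1) w by (auto simp: induced_def)
    ultimately obtain ps' where "K4_paths (insert w S) (subdivide_edge (induced E S) x z w) a b c d ps'"
      using xz(2) by (metis K4_paths_subdivide_edge)
    moreover have "induced (subdivide_edge E x z w) (insert w S) = subdivide_edge (induced E S) x z w"
      using induced_subdivide_edge[OF E w S(1)] True by simp
    ultimately have "subdivK4 (insert w S) (induced (subdivide_edge E x z w) (insert w S))"
      unfolding subdivK4_iff_K4_paths by metis
    moreover have "insert w S \<subseteq> insert w V" using S(1) by blast
    ultimately show False
      using free unfolding ISK4_free_def by blast
  next
    case False
    then have "subdivK4 S (induced (subdivide_edge E x z w) S)"
      using S induced_subdivide_edge_avoiding[OF E w S(1)] by simp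
    with S(1) free show False
      unfolding ISK4_free_def by blast
  qed
qed

section \<open>Holes and wheels\<close>

lemma hole_subset: "hole V E H \<Longrightarrow> H \<subseteq> V"
  by (simp add: hole_def)

lemma finite_hole: "hole V E H \<Longrightarrow> finite H"
  by (auto simp: hole_def)

lemma hole_induced_iff: "W \<subseteq> V \<Longrightarrow> hole W (induced E W) H \<longleftrightarrow> H \<subseteq> W \<and> hole V E H"
  unfolding hole_def by (auto simp: induced_induced)

lemma wheel_free_induced:
  assumes "wheel_free V E" "W \<subseteq> V"
  shows "wheel_free W (induced E W)"
proof -
  have "{t \<in> H. {t, c} \<in> induced E W} = {t \<in> H. {t, c} \<in> E}" if "H \<subseteq> W" "c \<in> W" for H c
    using that by (auto simp: induced_def)
  then show ?thesis
    using assms unfolding wheel_free_def by (auto simp: hole_induced_iff) blast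
qed

lemma hole_image:
  assumes inj: "inj_on f V" and E: "\<forall>e\<in>E. e \<subseteq> V" and H: "hole V E H"
  shows "hole (f ` V) ((\<lambda>e. f ` e) ` E) (f ` H)"
proof -
  obtain cs where cs: "H \<subseteq> V" "distinct cs" "length cs \<ge> 3" "set cs = H" "induced E H = cycle_edges cs"
    using H unfolding hole_iff_cycle_edges by blast
  have "cs \<noteq> []" using cs(3) by auto
  then have "induced ((\<lambda>e. f ` e) ` E) (f ` H) = cycle_edges (map f cs)"
    using induced_image[OF inj E cs(1)] cs(5) by (simp add: cycle_edges_map)
  moreover have "distinct (map f cs)"
    using cs inj_on_subset[OF inj cs(1)] by (simp add: distinct_map)
  ultimately show ?thesis
    using cs unfolding hole_iff_cycle_edges by (intro conjI exI[of _ "map f cs"]) auto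
qed

lemma neighbours_image:
  assumes inj: "inj_on f V" and E: "\<forall>e\<in>E. e \<subseteq> V" and H: "H \<subseteq> V" and c: "c \<in> V"
  shows "{t \<in> f ` H. {t, f c} \<in> (\<lambda>e. f ` e) ` E} = f ` {t \<in> H. {t, c} \<in> E}"
proof -
  have iff: "{f t, f c} \<in> (\<lambda>e. f ` e) ` E \<longleftrightarrow> {t, c} \<in> E" if "t \<in> H" for t
  proof
    assume "{f t, f c} \<in> (\<lambda>e. f ` e) ` E"
    then obtain e where e: "e \<in> E" "f ` {t, c} = f ` e" by auto
    have "{t, c} \<subseteq> V" using that H c by blast
    then have "{t, c} = e"
      using inj_on_image_eq_iff[OF inj] E e by blast
    with e(1) show "{t, c} \<in> E" by simp
  next
    assume "{t, c} \<in> E"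
    then have "f ` {t, c} \<in> (\<lambda>e. f ` e) ` E" by (rule imageI)
    then show "{f t, f c} \<in> (\<lambda>e. f ` e) ` E" by simp
  qed
  show ?thesis
  proof (rule set_eqI, rule iffI)
    fix t' assume "t' \<in> {t \<in> f ` H. {t, f c} \<in> (\<lambda>e. f ` e) ` E}"
    then obtain t where "t \<in> H" "t' = f t" "{f t, f c} \<in> (\<lambda>e. f ` e) ` E" by blast
    with iff show "t' \<in> f ` {t \<in> H. {t, c} \<in> E}" by blast
  next
    fix t' assume "t' \<in> f ` {t \<in> H. {t, c} \<in> E}"
    then obtain t where "t \<in> H" "t' = f t" "{t, c} \<in> E" by blast
    with iff show "t' \<in> {t \<in> f ` H. {t, f c} \<in> (\<lambda>e. f ` e) ` E}" by blast
  qed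
qed

lemma wheel_free_imageD:
  assumes inj: "inj_on f V" and E: "\<forall>e\<in>E. e \<subseteq> V"
    and free: "wheel_free (f ` V) ((\<lambda>e. f ` e) ` E)"
  shows "wheel_free V E"
  unfolding wheel_free_def
proof
  assume "\<exists>H c. hole V E H \<and> c \<in> V \<and> c \<notin> H \<and> 3 \<le> card {t \<in> H. {t, c} \<in> E}"
  then obtain H c where H: "hole V E H" and c: "c \<in> V" "c \<notin> H"
    and spokes: "3 \<le> card {t \<in> H. {t, c} \<in> E}" by blast
  have HV: "H \<subseteq> V" using H by (rule hole_subset)
  have "{t \<in> H. {t, c} \<in> E} \<subseteq> V" using HV by blast
  then have "card (f ` {t \<in> H. {t, c} \<in> E}) = card {t \<in> H. {t, c} \<in> E}"
    using inj_on_subset[OF inj] by (intro card_image) blast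
  then have "3 \<le> card {t \<in> f ` H. {t, f c} \<in> (\<lambda>e. f ` e) ` E}"
    using spokes neighbours_image[OF inj E HV c(1)] by simp
  moreover have "f c \<in> f ` V" "f c \<notin> f ` H"
    using inj_on_image_mem_iff[OF inj c(1) HV] c by auto
  ultimately show False
    using free hole_image[OF inj E H] unfolding wheel_free_def by blast
qed

lemma hole_subdivide_edge:
  assumes E: "\<forall>e\<in>E. e \<subseteq> V" and w: "w \<notin> V" and H: "hole V E H"
    and xz: "{x, z} \<in> E" "x \<in> H" "z \<in> H"
  shows "hole (insert w V) (subdivide_edge E x z w) (insert w H)"
proof -
  obtain cs where cs: "H \<subseteq> V" "distinct cs" "length cs \<ge> 3" "set cs = H" "induced E H = cycle_edges cs"
    using H unfolding hole_iff_cycle_edges by blast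
  have "{x, z} \<in> cycle_edges cs"
    using cs(5) xz by (auto simp: induced_def)
  then obtain k where k: "{x, z} = {last (rotate k cs), hd (rotate k cs)}"
    by (rule rotate_to_closing_edge)
  define cs' where "cs' = rotate k cs"
  have cs': "distinct cs'" "length cs' \<ge> 3" "set cs' = H" "cycle_edges cs' = induced E H"
    using cs unfolding cs'_def by simp_all
  then have "cs' \<noteq> []" by auto
  have "path_edges cs' = induced E H - {{x, z}}"
    using closing_edge_notin_path_edges[OF cs'(1,2)] k cs'(4)
    unfolding cs'_def cycle_edges_def by auto
  then have "cycle_edges (cs' @ [w]) = subdivide_edge (induced E H) x z w"
    using \<open>cs' \<noteq> []\<close> k unfolding cs'_def cycle_edges_def subdivide_edge_def
    by (auto simp: path_edges_snoc doubleton_eq_iff)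
  also have "\<dots> = induced (subdivide_edge E x z w) (insert w H)"
    using induced_subdivide_edge[OF E w cs(1) xz(2,3)] by simp
  finally have "induced (subdivide_edge E x z w) (insert w H) = cycle_edges (cs' @ [w])" ..
  moreover have "distinct (cs' @ [w])" "set (cs' @ [w]) = insert w H"
    using cs'(1,3) cs(1) w by auto
  ultimately show ?thesis
    using cs(1) cs'(2) unfolding hole_iff_cycle_edges by (intro conjI exI[of _ "cs' @ [w]"]) auto
qed

lemma hole_subdivide_edge_avoiding:
  assumes E: "\<forall>e\<in>E. e \<subseteq> V" and w: "w \<notin> V" and H: "hole V E H" and x: "x \<notin> H"
  shows "hole (insert w V) (subdivide_edge E x z w) H"
proof -
  have "induced (subdivide_edge E x z w) H = induced E H"
    using induced_subdivide_edge_avoiding[OF E w hole_subset[OF H]] x by simp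
  with H show ?thesis
    unfolding hole_def by (simp add: subset_insertI2)
qed

lemma hole_low_degree_neighbour:
  assumes H: "hole V E H" and x: "x \<in> H" and deg: "\<And>t. {t, x} \<in> E \<Longrightarrow> t = y \<or> t = z"
  shows "z \<in> H"
proof -
  obtain cs where cs: "distinct cs" "length cs \<ge> 3" "set cs = H" "induced E H = cycle_edges cs"
    using H unfolding hole_iff_cycle_edges by blast
  from x cs(3) have "x \<in> set cs" by simp
  then obtain a b where ab: "a \<noteq> b" "{x, a} \<in> cycle_edges cs" "{x, b} \<in> cycle_edges cs"
    by (rule cycle_edges_two_neighbours[OF cs(1,2)])
  then have "{x, a} \<in> induced E H" "{x, b} \<in> induced E H"
    using cs(4) by simp_all
  then have "{x, a} \<in> E" "{x, b} \<in> E" "a \<in> H" "b \<in> H"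
    by (auto simp: induced_def)
  moreover have "a = y \<or> a = z" "b = y \<or> b = z"
    using deg \<open>{x, a} \<in> E\<close> \<open>{x, b} \<in> E\<close> by (simp_all add: insert_commute)
  ultimately show ?thesis
    using ab(1) by blast
qed

text \<open>The subdivision only loses the edge \<open>xz\<close>, and the degree bound on \<open>x\<close> keeps it from being
  a spoke: \<open>x\<close> has too few neighbours to be a centre, and a hole through \<open>x\<close> also contains \<open>z\<close>.\<close>
lemma wheel_free_subdivide_edgeD:
  assumes E: "\<forall>e\<in>E. e \<subseteq> V" and w: "w \<notin> V" and xz: "{x, z} \<in> E"
    and deg: "\<And>t. {t, x} \<in> E \<Longrightarrow> t = y \<or> t = z"
    and free: "wheel_free (insert w V) (subdivide_edge E x z w)"
  shows "wheel_free V E"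
  unfolding wheel_free_def
proof
  assume "\<exists>H c. hole V E H \<and> c \<in> V \<and> c \<notin> H \<and> 3 \<le> card {t \<in> H. {t, c} \<in> E}"
  then obtain H c where H: "hole V E H" and c: "c \<in> V" "c \<notin> H"
    and spokes: "3 \<le> card {t \<in> H. {t, c} \<in> E}" by blast
  have "c \<noteq> x"
  proof
    assume "c = x"
    then have "card {t \<in> H. {t, c} \<in> E} \<le> card {y, z}"
      using deg by (intro card_mono) auto
    also have "\<dots> \<le> 2"
      by (simp add: card_insert_if)
    finally show False
      using spokes by simp
  qed
  have "c \<noteq> w" using c w by blast
  obtain H' where H': "hole (insert w V) (subdivide_edge E x z w) H'" "c \<notin> H'"
    and sub: "{t \<in> H. {t, c} \<in> E} \<subseteq> {t \<in> H'. {t, c} \<in> subdivide_edge E x z w}"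
  proof (cases "x \<in> H")
    case True
    then have "z \<in> H" by (rule hole_low_degree_neighbour[OF H _ deg])
    then have "{t, c} \<noteq> {x, z}" if "t \<in> H" for t
      using that c(2) \<open>c \<noteq> x\<close> by (auto simp: doubleton_eq_iff)
    then show thesis
      using hole_subdivide_edge[OF E w H xz True \<open>z \<in> H\<close>] c(2) \<open>c \<noteq> w\<close>
      by (intro that[of "insert w H"]) (auto simp: subdivide_edge_def)
  next
    case False
    then have "{t, c} \<noteq> {x, z}" if "t \<in> H" for t
      using that \<open>c \<noteq> x\<close> by (auto simp: doubleton_eq_iff)
    then show thesis
      using hole_subdivide_edge_avoiding[OF E w H False] c(2)
      by (intro that[of H]) (auto simp: subdivide_edge_def)
  qed
  have "finite H'" using H'(1) by (rule finite_hole)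
  then have "3 \<le> card {t \<in> H'. {t, c} \<in> subdivide_edge E x z w}"
    using spokes card_mono[OF _ sub] by simp
  then show False
    using free H' c(1) unfolding wheel_free_def by blast
qed

section \<open>ISK4-free and wheel-free graphs\<close>

lemma graph_induced:
  assumes "graph V E" "S \<subseteq> V"
  shows "graph S (induced E S)"
proof -
  have "finite S" using assms by (auto simp: graph_def intro: finite_subset)
  moreover have "\<exists>x y. e = {x, y} \<and> x \<noteq> y \<and> x \<in> S \<and> y \<in> S" if "e \<in> induced E S" for e
  proof -
    from that have "e \<in> E" "e \<subseteq> S" by (auto simp: induced_def)
    then obtain x y where "e = {x, y}" "x \<noteq> y" using assms(1) by (auto simp: graph_def)
    with \<open>e \<subseteq> S\<close> show ?thesis by blast
  qed
  ultimately show ?thesis by (simp add: graph_def)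
qed

lemma graph_imageD:
  assumes inj: "inj_on f V" and E: "\<forall>e\<in>E. e \<subseteq> V" and g: "graph (f ` V) ((\<lambda>e. f ` e) ` E)"
  shows "graph V E"
proof -
  have "finite V" using g inj by (simp add: graph_def finite_image_iff)
  moreover have "\<exists>x y. e = {x, y} \<and> x \<noteq> y \<and> x \<in> V \<and> y \<in> V" if e: "e \<in> E" for e
  proof -
    obtain x' y' where xy': "f ` e = {x', y'}" "x' \<noteq> y'"
      using g e by (auto simp: graph_def)
    then obtain x y where xy: "x \<in> e" "y \<in> e" "f x = x'" "f y = y'"
      by (metis imageE insertI1 insertI2)
    have "e \<subseteq> V" using E e by blast
    have "u = x \<or> u = y" if "u \<in> e" for u
      using that xy xy'(1) \<open>e \<subseteq> V\<close> inj_on_eq_iff[OF inj] by (metis imageI insertE singletonD subsetD)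
    then have "e = {x, y}" using xy(1,2) by blast
    with xy xy'(2) \<open>e \<subseteq> V\<close> show ?thesis by blast
  qed
  ultimately show ?thesis by (simp add: graph_def)
qed

lemma graph_subdivide_edgeD:
  assumes E: "\<forall>e\<in>E. e \<subseteq> V" and xz: "{x, z} \<in> E" "x \<noteq> z"
    and g: "graph (insert w V) (subdivide_edge E x z w)"
  shows "graph V E"
proof -
  have "finite V" using g by (simp add: graph_def)
  moreover have "\<exists>a b. e = {a, b} \<and> a \<noteq> b \<and> a \<in> V \<and> b \<in> V" if e: "e \<in> E" for e
  proof (cases "e = {x, z}")
    case True
    then show ?thesis using xz E by blast
  next
    case False
    then have "e \<in> subdivide_edge E x z w" using e by (simp add: subdivide_edge_def)
    then obtain a b where "e = {a, b}" "a \<noteq> b" using g by (auto simp: graph_def)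
    moreover have "e \<subseteq> V" using E e by blast
    ultimately show ?thesis by blast
  qed
  ultimately show ?thesis by (simp add: graph_def)
qed

lemma isk4_wheel_free_induced:
  assumes "isk4_wheel_free V E" "S \<subseteq> V"
  shows "isk4_wheel_free S (induced E S)"
  using assms graph_induced[OF _ assms(2)] ISK4_free_induced[OF _ assms(2)]
    wheel_free_induced[OF _ assms(2)]
  unfolding isk4_wheel_free_def by blast

lemma isk4_wheel_free_imageD:
  assumes inj: "inj_on f V" and E: "\<forall>e\<in>E. e \<subseteq> V"
    and free: "isk4_wheel_free (f ` V) ((\<lambda>e. f ` e) ` E)"
  shows "isk4_wheel_free V E"
  using free graph_imageD[OF inj E] ISK4_free_imageD[OF inj E] wheel_free_imageD[OF inj E]
  unfolding isk4_wheel_free_def by blast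

lemma isk4_wheel_free_subdivide_edgeD:
  assumes E: "\<forall>e\<in>E. e \<subseteq> V" and w: "w \<notin> V" and xz: "{x, z} \<in> E" "x \<noteq> z"
    and deg: "\<And>t. {t, x} \<in> E \<Longrightarrow> t = y \<or> t = z"
    and free: "isk4_wheel_free (insert w V) (subdivide_edge E x z w)"
  shows "isk4_wheel_free V E"
  using free graph_subdivide_edgeD[OF E xz] ISK4_free_subdivide_edgeD[OF E w xz]
    wheel_free_subdivide_edgeD[OF E w xz(1) deg]
  unfolding isk4_wheel_free_def by blast

lemma isk4_wheel_free_shorten_path:
  assumes pre: "pre \<noteq> []" and d: "distinct (pre @ [x, t, v])"
    and A: "x \<notin> A" "t \<notin> A" "v \<in> A" and F: "\<forall>e\<in>F. e \<subseteq> A"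
    and free: "isk4_wheel_free (A \<union> set (pre @ [x, t, v])) (F \<union> path_edges (pre @ [x, t, v]))"
  shows "isk4_wheel_free (A \<union> set (pre @ [x, v])) (F \<union> path_edges (pre @ [x, v]))"
proof (rule isk4_wheel_free_subdivide_edgeD)
  have edges: "path_edges (pre @ [x, v]) = insert {last pre, x} (insert {x, v} (path_edges pre))"
    using pre by (simp add: path_edges_append)
  have x_pre: "x \<notin> set pre" using d by simp
  have no_F: "{s, x} \<notin> F" "{x, s} \<notin> F" for s using F A(1) by blast+
  show "\<forall>e\<in>F \<union> path_edges (pre @ [x, v]). e \<subseteq> A \<union> set (pre @ [x, v])"
    using F path_edges_subset_set by blast
  show "t \<notin> A \<union> set (pre @ [x, v])" using A(2) d by auto
  show "{x, v} \<in> F \<union> path_edges (pre @ [x, v])" "x \<noteq> v" using edges d by auto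
  show "s = last pre \<or> s = v" if "{s, x} \<in> F \<union> path_edges (pre @ [x, v])" for s
    using that no_F(1) x_pre path_edges_subset_set[of "{s, x}" pre] edges
    by (auto simp: doubleton_eq_iff)
  have "path_edges (pre @ [x, t, v] @ []) = subdivide_edge (path_edges (pre @ [x, v] @ [])) x v t"
    using d by (intro path_edges_insert_vertex) auto
  then have "subdivide_edge (F \<union> path_edges (pre @ [x, v])) x v t = F \<union> path_edges (pre @ [x, t, v])"
    using subdivide_edge_Un[OF no_F(2)] by simp
  moreover have "insert t (A \<union> set (pre @ [x, v])) = A \<union> set (pre @ [x, t, v])"
    by auto
  ultimately show "isk4_wheel_free (insert t (A \<union> set (pre @ [x, v])))
      (subdivide_edge (F \<union> path_edges (pre @ [x, v])) x v t)"
    using free by simp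
qed

lemma isk4_wheel_free_contract_path:
  assumes "ms \<noteq> []" "distinct (u # ms @ [v])" "set ms \<inter> A = {}" "u \<in> A" "v \<in> A"
    "\<forall>e\<in>F. e \<subseteq> A"
    "isk4_wheel_free (A \<union> set (u # ms @ [v])) (F \<union> path_edges (u # ms @ [v]))"
  shows "isk4_wheel_free (A \<union> {u, hd ms, v}) (F \<union> {{u, hd ms}, {hd ms, v}})"
  using assms
proof (induction ms rule: rev_induct)
  case Nil
  then show ?case by simp
next
  case (snoc t ms)
  show ?case
  proof (cases "ms = []")
    case True
    then show ?thesis using snoc.prems(7) by (simp add: insert_commute)
  next
    case False
    define pre where "pre = u # butlast ms"
    have split: "u # ms = pre @ [last ms]" unfolding pre_def using False by simp
    have "last ms \<in> set ms" using False by simp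
    then have "last ms \<notin> A" "t \<notin> A"
      using snoc.prems(3) by auto
    moreover have "distinct (pre @ [last ms, t, v])"
      using snoc.prems(2) split by (metis append.assoc append_Cons append_Nil)
    moreover have "isk4_wheel_free (A \<union> set (pre @ [last ms, t, v])) (F \<union> path_edges (pre @ [last ms, t, v]))"
      using snoc.prems(7) split by (metis append.assoc append_Cons append_Nil)
    ultimately have "isk4_wheel_free (A \<union> set (pre @ [last ms, v])) (F \<union> path_edges (pre @ [last ms, v]))"
      using snoc.prems(5,6) by (intro isk4_wheel_free_shorten_path) (auto simp: pre_def)
    then have "isk4_wheel_free (A \<union> set (u # ms @ [v])) (F \<union> path_edges (u # ms @ [v]))"
      using split by (metis append.assoc append_Cons append_Nil)
    with False snoc.prems(2-6) have "isk4_wheel_free (A \<union> {u, hd ms, v}) (F \<union> {{u, hd ms}, {hd ms, v}})"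
      by (intro snoc.IH) auto
    then show ?thesis using False by simp
  qed
qed

section \<open>Connected components\<close>

lemma symp_adj_in: "symp (adj_in S E)"
  by (auto intro: sympI simp: adj_in_def insert_commute)

lemma component_eq:
  assumes "C \<in> components S E" "y \<in> C"
  shows "C = {z \<in> S. (adj_in S E)\<^sup>*\<^sup>* y z}"
proof -
  obtain x where x: "C = {z \<in> S. (adj_in S E)\<^sup>*\<^sup>* x z}"
    using assms(1) unfolding components_def by blast
  then have "(adj_in S E)\<^sup>*\<^sup>* x y"
    using assms(2) by blast
  then have "(adj_in S E)\<^sup>*\<^sup>* y x"
    by (rule sympD[OF symp_rtranclp[OF symp_adj_in]])
  with x assms(2) show ?thesis
    by (auto intro: rtranclp_trans)
qed

lemma component_subset: "C \<in> components S E \<Longrightarrow> C \<subseteq> S"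
  by (auto simp: components_def)

lemma component_nonempty: "C \<in> components S E \<Longrightarrow> C \<noteq> {}"
  by (auto simp: components_def)

lemma finite_components: "finite S \<Longrightarrow> finite (components S E)"
  by (rule finite_subset[of _ "Pow S"]) (auto simp: components_def)

lemma component_edge_closed:
  assumes "C \<in> components S E" "y \<in> C" "z \<in> S" "{y, z} \<in> E"
  shows "z \<in> C"
proof -
  have "adj_in S E y z"
    using assms component_subset by (auto simp: adj_in_def)
  then show ?thesis
    using component_eq[OF assms(1,2)] assms(3) by auto
qed

lemma components_disjoint:
  assumes "C \<in> components S E" "C' \<in> components S E" "C \<noteq> C'"
  shows "C \<inter> C' = {}"
  using component_eq[OF assms(1)] component_eq[OF assms(2)] assms(3) by blast

lemma components_no_edge:
  assumes "C \<in> components S E" "C' \<in> components S E" "C \<noteq> C'" "y \<in> C" "z \<in> C'"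
  shows "{y, z} \<notin> E"
  using component_edge_closed[OF assms(1,4)] components_disjoint[OF assms(1-3)] assms(5)
    component_subset[OF assms(2)] by blast

lemma two_le_card_components:
  assumes "finite S" "x \<in> S" "y \<in> S" "\<not> (adj_in S E)\<^sup>*\<^sup>* x y"
  shows "2 \<le> card (components S E)"
proof -
  define K where "K a = {z \<in> S. (adj_in S E)\<^sup>*\<^sup>* a z}" for a
  have "K x \<in> components S E" "K y \<in> components S E"
    using assms(2,3) unfolding K_def components_def by blast+
  moreover have "K x \<noteq> K y"
    using assms(3,4) unfolding K_def by auto
  ultimately have "card {K x, K y} \<le> card (components S E)"
    using finite_components[OF assms(1)] by (intro card_mono) auto
  with \<open>K x \<noteq> K y\<close> show ?thesis by simp
qed

lemma obtain_other_component:
  assumes "2 \<le> card (components S E)" "C \<in> components S E"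
  obtains C' where "C' \<in> components S E" "C' \<noteq> C"
proof -
  have "\<not> components S E \<subseteq> {C}"
    using assms(1) card_mono[of "{C}" "components S E"] by auto
  with that show thesis by blast
qed

text \<open>Otherwise \<open>C'\<close> would still be separated from \<open>C\<close> in \<open>G - v\<close>, making \<open>v\<close> a 1-cutset.\<close>
lemma neighbour_in_component:
  assumes g: "graph V E" and n1: "\<not> has_1cutset V E" and v: "v \<in> V"
    and C: "C \<in> components (V - {u, v}) E" and C': "C' \<in> components (V - {u, v}) E" "C' \<noteq> C"
  obtains a where "a \<in> C'" "{u, a} \<in> E"
proof (rule ccontr)
  assume "\<not> thesis"
  with that have no_nb: "{u, a} \<notin> E" if "a \<in> C'" for a
    using that by blast
  obtain c c' where c: "c \<in> C" "c' \<in> C'"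
    using component_nonempty[OF C] component_nonempty[OF C'(1)] by blast
  have stays: "y \<in> C'" if "(adj_in (V - {v}) E)\<^sup>*\<^sup>* c' y" for y
    using that
  proof (induction rule: rtranclp_induct)
    case base
    show ?case by (rule c(2))
  next
    case (step y z)
    then have "z \<in> V - {v}" "{y, z} \<in> E" by (auto simp: adj_in_def)
    moreover have "z \<noteq> u"
      using no_nb[OF step.IH] \<open>{y, z} \<in> E\<close> by (auto simp: insert_commute)
    ultimately show ?case
      using component_edge_closed[OF C'(1) step.IH] by blast
  qed
  have "c \<notin> C'"
    using components_disjoint[OF C C'(1) C'(2)[symmetric]] c(1) by blast
  moreover have "c \<in> V - {v}" "c' \<in> V - {v}"
    using c component_subset[OF C] component_subset[OF C'(1)] by blast+
  moreover have "finite (V - {v})"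
    using g by (simp add: graph_def)
  ultimately have "2 \<le> card (components (V - {v}) E)"
    using stays by (intro two_le_card_components[of _ c' c]) blast+
  with v n1 show False
    unfolding has_1cutset_def by blast
qed

lemma reachable_walk:
  assumes "(adj_in S E)\<^sup>*\<^sup>* a b" "a \<in> S"
  obtains L where "L \<noteq> []" "hd L = a" "last L = b" "path_edges L \<subseteq> E"
    "set L \<subseteq> {y \<in> S. (adj_in S E)\<^sup>*\<^sup>* a y}"
proof -
  from assms(1) have "\<exists>L. L \<noteq> [] \<and> hd L = a \<and> last L = b \<and> path_edges L \<subseteq> E \<and>
      set L \<subseteq> {y \<in> S. (adj_in S E)\<^sup>*\<^sup>* a y}"
  proof (induction rule: rtranclp_induct)
    case base
    then show ?case using assms(2) by (intro exI[of _ "[a]"]) simp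
  next
    case (step y z)
    then obtain L where L: "L \<noteq> []" "hd L = a" "last L = y" "path_edges L \<subseteq> E"
      "set L \<subseteq> {y \<in> S. (adj_in S E)\<^sup>*\<^sup>* a y}" by blast
    have "z \<in> S" "{y, z} \<in> E" using step(2) by (auto simp: adj_in_def)
    with L step(1,2) show ?case
      by (intro exI[of _ "L @ [z]"]) (auto simp: path_edges_snoc hd_append)
  qed
  with that show thesis by blast
qed

section \<open>Induced paths\<close>

lemma induced_set_eq_path_edges:
  assumes g: "graph V E" and P: "path_edges P \<subseteq> E"
    and chords: "\<And>p q r a b. P = p @ a # q @ b # r \<Longrightarrow> {a, b} \<in> E \<Longrightarrow> {a, b} \<in> path_edges P"
  shows "induced E (set P) = path_edges P"
proof
  show "induced E (set P) \<subseteq> path_edges P"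
  proof
    fix e assume "e \<in> induced E (set P)"
    then obtain a b where e: "e = {a, b}" "a \<noteq> b" "a \<in> set P" "b \<in> set P" "{a, b} \<in> E"
      using g by (auto simp: induced_def graph_def)
    obtain p r0 where P_a: "P = p @ a # r0"
      using e(3) by (meson split_list)
    then have "b \<in> set p \<or> b \<in> set r0"
      using e(2,4) by auto
    then show "e \<in> path_edges P"
    proof
      assume "b \<in> set p"
      then obtain p1 q where "p = p1 @ b # q" by (meson split_list)
      then have "{b, a} \<in> path_edges P"
        using chords[of p1 b q a r0] P_a e(5) by (simp add: insert_commute)
      then show ?thesis using e(1) by (simp add: insert_commute)
    next
      assume "b \<in> set r0"
      then obtain q r where "r0 = q @ b # r" by (meson split_list)
      then show ?thesis using chords[of p a q b r] P_a e(1,5) by simp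
    qed
  qed
  show "path_edges P \<subseteq> induced E (set P)"
    using P path_edges_subset_set unfolding induced_def by blast
qed

text \<open>A shortest walk is an induced path: a repeated vertex or a chord would give a shortcut.\<close>
lemma walk_contains_induced_path:
  assumes g: "graph V E" and L: "L \<noteq> []" "path_edges L \<subseteq> E"
  obtains P where "P \<noteq> []" "hd P = hd L" "last P = last L" "set P \<subseteq> set L" "distinct P"
    "induced E (set P) = path_edges P"
proof -
  define walk where "walk Q \<longleftrightarrow> Q \<noteq> [] \<and> hd Q = hd L \<and> last Q = last L \<and> set Q \<subseteq> set L \<and>
    path_edges Q \<subseteq> E" for Q
  obtain P where P: "walk P" and shortest: "\<And>Q. walk Q \<Longrightarrow> length P \<le> length Q"
    using ex_has_least_nat[of walk L length] L unfolding walk_def by blast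
  have "distinct P"
  proof (rule ccontr)
    assume "\<not> distinct P"
    then obtain p a q r where P_eq: "P = p @ a # q @ a # r"
      using not_distinct_decomp by fastforce
    have "walk (p @ a # r)"
      using P path_edges_skip_loop[of p a r q] unfolding walk_def P_eq
      by (auto simp: hd_append)
    then show False
      using shortest P_eq by fastforce
  qed
  moreover have "induced E (set P) = path_edges P"
  proof (rule induced_set_eq_path_edges[OF g])
    show "path_edges P \<subseteq> E"
      using P unfolding walk_def by blast
    fix p q r a b assume P_eq: "P = p @ a # q @ b # r" and ab: "{a, b} \<in> E"
    show "{a, b} \<in> path_edges P"
    proof (cases q)
      case Nil
      then show ?thesis using P_eq by (auto simp: path_edges_append)
    next
      case (Cons c q')
      have "walk (p @ a # b # r)"
        using P path_edges_skip_chord[of p a b r q] P_eq ab unfolding walk_def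
        by (auto simp: hd_append)
      then show ?thesis
        using shortest P_eq Cons by fastforce
    qed
  qed
  ultimately show thesis
    using that P unfolding walk_def by blast
qed

lemma induced_Un_induced_path:
  assumes E: "\<forall>e\<in>E. \<exists>a b. e = {a, b}" and P: "induced E (set P) = path_edges P"
    and no_edge: "\<And>a b. a \<in> A - set P \<Longrightarrow> b \<in> set P - A \<Longrightarrow> {a, b} \<notin> E"
  shows "induced E (A \<union> set P) = induced E A \<union> path_edges P"
proof
  show "induced E (A \<union> set P) \<subseteq> induced E A \<union> path_edges P"
  proof
    fix e assume e: "e \<in> induced E (A \<union> set P)"
    then obtain a b where ab: "e = {a, b}" "e \<in> E" "a \<in> A \<union> set P" "b \<in> A \<union> set P"
      using E by (auto simp: induced_def)
    consider "e \<subseteq> A" | "e \<subseteq> set P" | "a \<in> A - set P" "b \<in> set P - A" | "b \<in> A - set P" "a \<in> set P - A"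
      using ab(1,3,4) by blast
    then show "e \<in> induced E A \<union> path_edges P"
    proof cases
      case 1 then show ?thesis using ab(2) by (simp add: induced_def)
    next
      case 2 then show ?thesis using ab(2) P by (auto simp: induced_def)
    next
      case 3 then show ?thesis using no_edge ab(1,2) by blast
    next
      case 4 then show ?thesis using no_edge[of b a] ab(1,2) by (simp add: insert_commute)
    qed
  qed
  show "induced E A \<union> path_edges P \<subseteq> induced E (A \<union> set P)"
    using P by (auto simp: induced_def)
qed

lemma induced_path_through_component:
  assumes g: "graph V E" and n1: "\<not> has_1cutset V E"
    and uv: "u \<in> V" "v \<in> V" "u \<noteq> v" "{u, v} \<notin> E"
    and C: "C \<in> components (V - {u, v}) E" and C': "C' \<in> components (V - {u, v}) E" "C' \<noteq> C"
  obtains ms where "ms \<noteq> []" "set ms \<subseteq> C'" "distinct (u # ms @ [v])"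
    "induced E (set (u # ms @ [v])) = path_edges (u # ms @ [v])"
proof -
  obtain a where a: "a \<in> C'" "{u, a} \<in> E"
    using neighbour_in_component[OF g n1 uv(2) C C'] .
  have "C \<in> components (V - {v, u}) E" "C' \<in> components (V - {v, u}) E"
    using C C'(1) by (simp_all add: insert_commute)
  then obtain b where b: "b \<in> C'" "{v, b} \<in> E"
    using neighbour_in_component[OF g n1 uv(1) _ _ C'(2)] by blast
  have C'_eq: "C' = {y \<in> V - {u, v}. (adj_in (V - {u, v}) E)\<^sup>*\<^sup>* a y}"
    using component_eq[OF C'(1) a(1)] .
  then obtain L where L: "L \<noteq> []" "hd L = a" "last L = b" "path_edges L \<subseteq> E" "set L \<subseteq> C'"
    using reachable_walk[of "V - {u, v}" E a b] b(1) a(1) component_subset[OF C'(1)] by blast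
  have walk: "path_edges (u # L @ [v]) \<subseteq> E"
    using L a(2) b(2) by (auto simp: path_edges_Cons path_edges_snoc insert_commute)
  obtain P where P: "P \<noteq> []" "hd P = hd (u # L @ [v])" "last P = last (u # L @ [v])"
    "set P \<subseteq> set (u # L @ [v])" "distinct P" "induced E (set P) = path_edges P"
    by (rule walk_contains_induced_path[OF g _ walk]) simp
  obtain rest where P_rest: "P = u # rest"
    using P(1,2) by (cases P) auto
  with P(3) uv(3) have "rest \<noteq> [] \<and> last rest = v"
    by (cases "rest = []") auto
  then have "rest = butlast rest @ [v]"
    by (metis append_butlast_last_id)
  with P_rest obtain ms where P_eq: "P = u # ms @ [v]"
    by blast
  have "ms \<noteq> []"
  proof
    assume "ms = []"
    then have "{u, v} \<in> induced E (set P)" using P(6) P_eq by simp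
    with uv(4) show False by (simp add: induced_def)
  qed
  moreover have "set ms \<subseteq> C'"
    using P(4,5) P_eq L(5) by auto
  ultimately show thesis
    using that P(5,6) P_eq by blast
qed

section \<open>The blocks of a 2-cutset\<close>

lemma isk4_wheel_free_cl:
  assumes "isk4_wheel_free V E" "C \<subseteq> V" "u \<in> V" "v \<in> V" "{u, v} \<in> E"
  shows "isk4_wheel_free (cl_V C u v) (cl_E E C u v)"
proof -
  have "cl_E E C u v = induced E (C \<union> {u, v})"
    using assms(5) by (auto simp: cl_E_def induced_def)
  then show ?thesis
    using isk4_wheel_free_induced[OF assms(1)] assms(2-4) by (simp add: cl_V_def)
qed

text \<open>The subdividing vertex \<open>None\<close> of \<open>cl*(C)\<close> is renamed to \<open>m\<close>.\<close>
lemma isk4_wheel_free_clstar: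
  assumes uv: "{u, v} \<notin> E" and m: "m \<notin> C \<union> {u, v}"
    and free: "isk4_wheel_free (C \<union> {u, m, v}) (induced E (C \<union> {u, v}) \<union> {{u, m}, {m, v}})"
  shows "isk4_wheel_free (clstar_V C u v) (clstar_E E C u v)"
proof (rule isk4_wheel_free_imageD)
  define f where "f = case_option m id"
  have "cl_E E C u v - {{u, v}} = induced E (C \<union> {u, v})"
    using uv by (auto simp: cl_E_def induced_def)
  then have Es: "clstar_E E C u v =
      (\<lambda>e. Some ` e) ` induced E (C \<union> {u, v}) \<union> {{Some u, None}, {None, Some v}}"
    by (simp add: clstar_E_def)
  show "inj_on f (clstar_V C u v)"
    using m by (auto simp: inj_on_def f_def clstar_V_def split: option.splits)
  show "\<forall>e\<in>clstar_E E C u v. e \<subseteq> clstar_V C u v"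
    unfolding Es clstar_V_def by (auto simp: induced_def)
  have "f ` clstar_V C u v = C \<union> {u, m, v}"
    unfolding clstar_V_def image_Un image_image f_def by auto
  moreover have "(\<lambda>e. f ` e) ` clstar_E E C u v = induced E (C \<union> {u, v}) \<union> {{u, m}, {m, v}}"
    unfolding Es by (auto simp: f_def image_image)
  ultimately show "isk4_wheel_free (f ` clstar_V C u v) ((\<lambda>e. f ` e) ` clstar_E E C u v)"
    using free by simp
qed

text \<open>A chordless \<open>u\<close>-\<open>v\<close> path through another component, contracted to length two,
  turns the induced subgraph on \<open>C\<close> plus the path into a copy of \<open>cl*(C)\<close>.\<close>
lemma clstar_copy_isk4_wheel_free:
  assumes free: "isk4_wheel_free V E" and n1: "\<not> has_1cutset V E"
    and uv: "u \<in> V" "v \<in> V" "u \<noteq> v" "{u, v} \<notin> E"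
    and two: "2 \<le> card (components (V - {u, v}) E)" and C: "C \<in> components (V - {u, v}) E"
  obtains m where "m \<notin> C \<union> {u, v}"
    "isk4_wheel_free (C \<union> {u, m, v}) (induced E (C \<union> {u, v}) \<union> {{u, m}, {m, v}})"
proof -
  have g: "graph V E" using free by (simp add: isk4_wheel_free_def)
  obtain C' where C': "C' \<in> components (V - {u, v}) E" "C' \<noteq> C"
    using obtain_other_component[OF two C] .
  obtain ms where ms: "ms \<noteq> []" "set ms \<subseteq> C'" "distinct (u # ms @ [v])"
    "induced E (set (u # ms @ [v])) = path_edges (u # ms @ [v])"
    using induced_path_through_component[OF g n1 uv C C'] .
  define A where "A = C \<union> {u, v}"
  have CC': "C \<subseteq> V - {u, v}" "C' \<subseteq> V - {u, v}" "C \<inter> C' = {}"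
    using component_subset[OF C] component_subset[OF C'(1)] components_disjoint[OF C C'(1) C'(2)[symmetric]]
    by simp_all
  then have ms_A: "set ms \<inter> A = {}"
    using ms(2) unfolding A_def by blast
  have induced_eq: "induced E (A \<union> set (u # ms @ [v])) = induced E A \<union> path_edges (u # ms @ [v])"
  proof (rule induced_Un_induced_path[OF _ ms(4)])
    show "\<forall>e\<in>E. \<exists>a b. e = {a, b}"
      using g unfolding graph_def by blast
    fix a b assume "a \<in> A - set (u # ms @ [v])" "b \<in> set (u # ms @ [v]) - A"
    then have "a \<in> C" "b \<in> C'" using ms(2) unfolding A_def by auto
    then show "{a, b} \<notin> E" by (rule components_no_edge[OF C C'(1) C'(2)[symmetric]])
  qed
  have "A \<union> set (u # ms @ [v]) \<subseteq> V"
    using CC' uv ms(2) unfolding A_def by auto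
  from isk4_wheel_free_induced[OF free this]
  have path_free: "isk4_wheel_free (A \<union> set (u # ms @ [v])) (induced E A \<union> path_edges (u # ms @ [v]))"
    unfolding induced_eq .
  have "u \<in> A" "v \<in> A" "\<forall>e\<in>induced E A. e \<subseteq> A"
    unfolding A_def induced_def by auto
  from isk4_wheel_free_contract_path[OF ms(1,3) ms_A this path_free]
  have "isk4_wheel_free (A \<union> {u, hd ms, v}) (induced E A \<union> {{u, hd ms}, {hd ms, v}})" .
  moreover have "A \<union> {u, hd ms, v} = C \<union> {u, hd ms, v}"
    unfolding A_def by blast
  moreover have "hd ms \<notin> A"
    using ms(1) ms_A by (cases ms) auto
  ultimately show thesis
    using that[of "hd ms"] unfolding A_def by simp
qed

theorem mainTheorem4:
  fixes V :: "'a set" and E :: "'a set set" and u v :: 'a and C :: "'a set"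
  assumes "isk4_wheel_free V E"
    and "\<not> has_1cutset V E"
    and "is_2cutset V E u v"
    and "C \<in> components (V - {u, v}) E"
  shows "isk4_wheel_free (cl_V C u v) (cl_E E C u v)
         \<or> isk4_wheel_free (clstar_V C u v) (clstar_E E C u v)"
proof (cases "{u, v} \<in> E")
  case True
  have "C \<subseteq> V" "u \<in> V" "v \<in> V"
    using component_subset[OF assms(4)] assms(3) by (auto simp: is_2cutset_def)
  then show ?thesis
    using isk4_wheel_free_cl[OF assms(1) _ _ _ True] by blast
next
  case False
  from assms(3) have uv: "u \<in> V" "v \<in> V" "u \<noteq> v" "2 \<le> card (components (V - {u, v}) E)"
    by (simp_all add: is_2cutset_def)
  obtain m where "m \<notin> C \<union> {u, v}"
    "isk4_wheel_free (C \<union> {u, m, v}) (induced E (C \<union> {u, v}) \<union> {{u, m}, {m, v}})"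
    using clstar_copy_isk4_wheel_free[OF assms(1,2) uv(1-3) False uv(4) assms(4)] .
  then show ?thesis
    using isk4_wheel_free_clstar[OF False] by blast
qed

end
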